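(* Let $(E,(\cdot,\cdot),\mathcal H)$ be an extended affine Lie algebra with root system $R$, and let $\mathcal H_R$ and $\hat E=\mathcal H_R+E_c$ be as in the context. If $E$ is tame, then the orthogonal complement $\mathcal H_R^\perp$ of $\mathcal H_R$ in $\mathcal H$ is $\{0\}$ and $\hat E=\mathcal H+E_c$.
   Context: All Lie algebras are over $\mathbb C$. An extended affine Lie algebra (EALA) is a triple $(E,(\cdot,\cdot),\mathcal H)$ where $E$ is a Lie algebra, $\mathcal H$ a subalgebra and $(\cdot,\cdot)$ a bilinear form on $E$ such that: (EA1) symmetric, non-degenerate, invariant form; (EA2) $\mathcal H$ finite-dimensional, $E=\bigoplus_{\alpha\in\mathcal H^*}E_\alpha$, $E_\alpha=\{x:[h,x]=\alpha(h)x\ \forall h\in\mathcal H\}$, $E_0=\mathcal H$; root system $R=\{\alpha:E_\alpha\neq0\}$; $t_\alpha\in\mathcal H$ given by $\alpha(h)=(h,t_\alpha)$, $(\alpha,\beta):=(t_\alpha,t_\beta)$, $R^\times=\{\alpha\in R:(\alpha,\alpha)\neq0\}$, $R^0=R\setminus R^\times$; (EA3) $\mathrm{ad}\,x$ locally nilpotent for $x\in E_\alpha$, $\alpha\in R^\times$; (EA4) $R$ discrete; (EA5) $R^\times$ connected (not a union of two nonempty mutually orthogonal subsets) and every isotropic root non-isolated. Let $\mathcal V=\mathrm{span}_{\mathbb R}R$, $\mathcal V^0=\mathrm{span}_{\mathbb R}R^0$; the image $\bar R$ of $R$ in $\mathcal V/\mathcal V^0$ is an irreducible finite root system, assumed reduced.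 The core $E_c$ is the subalgebra generated by the $E_\alpha$, $\alpha\in R^\times$; $E$ is tame if $E_c^\perp\subseteq Z(E_c)$. Fix a finite root system $\dot R\subseteq R$ (containing $0$) with $R\subseteq\dot R+\mathcal V^0$ mapping bijectively onto $\bar R$. Put $\dot{\mathcal H}=\sum_{\dot\alpha\in\dot R}\mathbb Ct_{\dot\alpha}$, $\mathcal H_c=\sum_{\alpha\in R^\times}\mathbb Ct_\alpha$, $\mathcal H^0=\sum_{\sigma\in R^0}\mathbb Ct_\sigma$. Choose $\hat{\mathcal H}^0$ in the orthogonal complement of $\dot{\mathcal H}$ in $\mathcal H$ with $\dim\hat{\mathcal H}^0=\dim\mathcal H^0$, $(\hat{\mathcal H}^0,\hat{\mathcal H}^0)=0$ and the form non-degenerate on $\mathcal H^0\oplus\hat{\mathcal H}^0$; set $\mathcal H_R=\mathcal H_c\oplus\hat{\mathcal H}^0$ and $\hat E=\mathcal H_R+E_c$. *)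

theory Defs
  imports "HOL-Analysis.Analysis"
begin

text \<open>Complex vector spaces are modelled by an abelian group type 'a together with a
scalar multiplication sc satisfying the vector space axioms over the complex field
(locale vector_space from HOL.Vector_Spaces).\<close>

definition ssum :: "'a::ab_group_add set \<Rightarrow> 'a set \<Rightarrow> 'a set" where
  "ssum A B = {a + b | a b. a \<in> A \<and> b \<in> B}"

definition cbilinear :: "(complex \<Rightarrow> 'a::ab_group_add \<Rightarrow> 'a) \<Rightarrow> ('a \<Rightarrow> 'a \<Rightarrow> 'a) \<Rightarrow> bool" where
  "cbilinear sc f \<longleftrightarrow>
     (\<forall>x y z. f (x + y) z = f x z + f y z) \<and> (\<forall>x y z. f x (y + z) = f x y + f x z) \<and>
     (\<forall>c x y. f (sc c x) y = sc c (f x y)) \<and> (\<forall>c x y. f x (sc c y) = sc c (f x y))"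

definition cbilinear_form :: "(complex \<Rightarrow> 'a::ab_group_add \<Rightarrow> 'a) \<Rightarrow> ('a \<Rightarrow> 'a \<Rightarrow> complex) \<Rightarrow> bool" where
  "cbilinear_form sc f \<longleftrightarrow>
     (\<forall>x y z. f (x + y) z = f x z + f y z) \<and> (\<forall>x y z. f x (y + z) = f x y + f x z) \<and>
     (\<forall>c x y. f (sc c x) y = c * f x y) \<and> (\<forall>c x y. f x (sc c y) = c * f x y)"

definition lie_algebra :: "(complex \<Rightarrow> 'a::ab_group_add \<Rightarrow> 'a) \<Rightarrow> ('a \<Rightarrow> 'a \<Rightarrow> 'a) \<Rightarrow> bool" where
  "lie_algebra sc br \<longleftrightarrow> vector_space sc \<and> cbilinear sc br \<and> (\<forall>x. br x x = 0) \<and>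
     (\<forall>x y z. br x (br y z) + br y (br z x) + br z (br x y) = 0)"

definition subalgebra :: "(complex \<Rightarrow> 'a::ab_group_add \<Rightarrow> 'a) \<Rightarrow> ('a \<Rightarrow> 'a \<Rightarrow> 'a) \<Rightarrow> 'a set \<Rightarrow> bool" where
  "subalgebra sc br S \<longleftrightarrow> module.subspace sc S \<and> (\<forall>x\<in>S. \<forall>y\<in>S. br x y \<in> S)"

text \<open>Linear functionals on H (elements of H-dual), represented extensionally
(value 0 outside H).\<close>
definition Hdual :: "(complex \<Rightarrow> 'a::ab_group_add \<Rightarrow> 'a) \<Rightarrow> 'a set \<Rightarrow> ('a \<Rightarrow> complex) set" where
  "Hdual sc H = {\<alpha>. (\<forall>x\<in>H. \<forall>y\<in>H. \<alpha> (x + y) = \<alpha> x + \<alpha> y) \<and>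
                    (\<forall>c. \<forall>x\<in>H. \<alpha> (sc c x) = c * \<alpha> x) \<and> (\<forall>x. x \<notin> H \<longrightarrow> \<alpha> x = 0)}"

definition rootsp :: "(complex \<Rightarrow> 'a::ab_group_add \<Rightarrow> 'a) \<Rightarrow> ('a \<Rightarrow> 'a \<Rightarrow> 'a) \<Rightarrow> 'a set \<Rightarrow> ('a \<Rightarrow> complex) \<Rightarrow> 'a set" where
  "rootsp sc br H \<alpha> = {x. \<forall>h\<in>H. br h x = sc (\<alpha> h) x}"

definition roots :: "(complex \<Rightarrow> 'a::ab_group_add \<Rightarrow> 'a) \<Rightarrow> ('a \<Rightarrow> 'a \<Rightarrow> 'a) \<Rightarrow> 'a set \<Rightarrow> ('a \<Rightarrow> complex) set" where
  "roots sc br H = {\<alpha> \<in> Hdual sc H. rootsp sc br H \<alpha> \<noteq> {0}}"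

definition tvec :: "('a \<Rightarrow> 'a \<Rightarrow> complex) \<Rightarrow> 'a set \<Rightarrow> ('a \<Rightarrow> complex) \<Rightarrow> 'a" where
  "tvec B H \<alpha> = (THE t. t \<in> H \<and> (\<forall>h\<in>H. \<alpha> h = B h t))"

definition dform :: "('a \<Rightarrow> 'a \<Rightarrow> complex) \<Rightarrow> 'a set \<Rightarrow> ('a \<Rightarrow> complex) \<Rightarrow> ('a \<Rightarrow> complex) \<Rightarrow> complex" where
  "dform B H \<alpha> \<beta> = B (tvec B H \<alpha>) (tvec B H \<beta>)"

definition nonisotropic_roots where
  "nonisotropic_roots sc br B H = {\<alpha> \<in> roots sc br H. dform B H \<alpha> \<alpha> \<noteq> 0}"

definition isotropic_roots where
  "isotropic_roots sc br B H = roots sc br H - nonisotropic_roots sc br B H"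

definition rspan :: "('a \<Rightarrow> complex) set \<Rightarrow> ('a \<Rightarrow> complex) set" where
  "rspan S = {(\<lambda>x. \<Sum>\<alpha>\<in>F. complex_of_real (c \<alpha>) * \<alpha> x) | F c. finite F \<and> F \<subseteq> S}"

text \<open>Discreteness of a subset of H-dual (H finite-dimensional): the natural topology on
H-dual is the topology of pointwise convergence on H.\<close>
definition discrete_dual :: "'a set \<Rightarrow> ('a \<Rightarrow> complex) set \<Rightarrow> bool" where
  "discrete_dual H S \<longleftrightarrow> (\<forall>\<alpha>\<in>S. \<exists>F e. finite F \<and> F \<subseteq> H \<and> e > 0 \<and>
       (\<forall>\<beta>\<in>S. (\<forall>h\<in>F. cmod (\<beta> h - \<alpha> h) < e) \<longrightarrow> \<beta> = \<alpha>))"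

definition EALA :: "(complex \<Rightarrow> 'a::ab_group_add \<Rightarrow> 'a) \<Rightarrow> ('a \<Rightarrow> 'a \<Rightarrow> 'a) \<Rightarrow>
     ('a \<Rightarrow> 'a \<Rightarrow> complex) \<Rightarrow> 'a set \<Rightarrow> bool" where
  "EALA sc br B H \<longleftrightarrow>
     lie_algebra sc br \<and> subalgebra sc br H \<and>
     \<comment> \<open>EA1\<close>
     cbilinear_form sc B \<and> (\<forall>x y. B x y = B y x) \<and> (\<forall>x. (\<forall>y. B x y = 0) \<longrightarrow> x = 0) \<and>
     (\<forall>x y z. B (br x y) z = B x (br y z)) \<and>
     \<comment> \<open>EA2\<close>
     (\<exists>F. finite F \<and> F \<subseteq> H \<and> module.span sc F = H) \<and>
     (\<forall>x. \<exists>S f. finite S \<and> S \<subseteq> Hdual sc H \<and> (\<forall>\<alpha>\<in>S. f \<alpha> \<in> rootsp sc br H \<alpha>) \<and> x = (\<Sum>\<alpha>\<in>S. f \<alpha>)) \<and>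
     (\<forall>S f. finite S \<and> S \<subseteq> Hdual sc H \<and> (\<forall>\<alpha>\<in>S. f \<alpha> \<in> rootsp sc br H \<alpha>) \<and> (\<Sum>\<alpha>\<in>S. f \<alpha>) = 0
        \<longrightarrow> (\<forall>\<alpha>\<in>S. f \<alpha> = 0)) \<and>
     rootsp sc br H (\<lambda>_. 0) = H \<and>
     \<comment> \<open>EA3\<close>
     (\<forall>\<alpha>\<in>nonisotropic_roots sc br B H. \<forall>x\<in>rootsp sc br H \<alpha>. \<forall>y. \<exists>n. (br x ^^ n) y = 0) \<and>
     \<comment> \<open>EA4\<close>
     discrete_dual H (roots sc br H) \<and>
     \<comment> \<open>EA5\<close>
     \<not> (\<exists>P Q. P \<noteq> {} \<and> Q \<noteq> {} \<and> P \<union> Q = nonisotropic_roots sc br B H \<and>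
            (\<forall>\<alpha>\<in>P. \<forall>\<beta>\<in>Q. dform B H \<alpha> \<beta> = 0)) \<and>
     (\<forall>\<sigma>\<in>isotropic_roots sc br B H. \<exists>\<alpha>\<in>nonisotropic_roots sc br B H. (\<lambda>x. \<sigma> x + \<alpha> x) \<in> roots sc br H)"

definition core where
  "core sc br B H = \<Inter>{S. subalgebra sc br S \<and>
      (\<Union>\<alpha>\<in>nonisotropic_roots sc br B H. rootsp sc br H \<alpha>) \<subseteq> S}"

definition orth :: "('a \<Rightarrow> 'a \<Rightarrow> complex) \<Rightarrow> 'a set \<Rightarrow> 'a set \<Rightarrow> 'a set" where
  "orth B U S = {x \<in> U. \<forall>y\<in>S. B x y = 0}"

definition centre :: "('a::zero \<Rightarrow> 'a \<Rightarrow> 'a) \<Rightarrow> 'a set \<Rightarrow> 'a set" where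
  "centre br S = {x \<in> S. \<forall>y\<in>S. br x y = 0}"

definition tame where
  "tame sc br B H \<longleftrightarrow> orth B UNIV (core sc br B H) \<subseteq> centre br (core sc br B H)"

definition finite_root_system :: "('a \<Rightarrow> 'a \<Rightarrow> complex) \<Rightarrow> 'a set \<Rightarrow> ('a \<Rightarrow> complex) set \<Rightarrow> bool" where
  "finite_root_system B H S \<longleftrightarrow> finite S \<and> (\<lambda>_. 0) \<in> S \<and>
     (\<forall>v\<in>rspan S. v \<noteq> (\<lambda>_. 0) \<longrightarrow> dform B H v v \<in> \<real> \<and> Re (dform B H v v) > 0) \<and>
     (\<forall>\<alpha>\<in>S - {\<lambda>_. 0}. \<forall>\<beta>\<in>S. 2 * dform B H \<beta> \<alpha> / dform B H \<alpha> \<alpha> \<in> \<int> \<and>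
        (\<lambda>x. \<beta> x - (2 * dform B H \<beta> \<alpha> / dform B H \<alpha> \<alpha>) * \<alpha> x) \<in> S)"

end

(* Let K be the set of elements of H on which all nonisotropic roots vanish. Tameness makes K
   totally isotropic: K is orthogonal to the core and commutes with it, so it lies in the
   centre of the core, hence in the core.

   The key structural fact is that every root vanishes at t_sigma for isotropic sigma:
   otherwise, along the infinite string alpha + n sigma, the sl2 integrality of
   2 (sigma, beta) / (beta, beta) fails for large |n|. Consequently H_0 <= H_c <= dotH + H_0,
   with H_0 orthogonal to dotH = span t(dotR); positivity of the form on the real span of
   dotR then makes U = H_c + Hhat_0 nondegenerate.

   Riesz representation on U splits H as U plus the part of H orthogonal to U. That part
   lies in K, so it is orthogonal to U and to itself, hence to all of H; it is therefore
   zero, and U = H. *)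

theory Submission
  imports Defs
begin

lemma ssumI: "a \<in> A \<Longrightarrow> b \<in> C \<Longrightarrow> a + b \<in> ssum A C"
  unfolding ssum_def by blast

lemma ssumE: "x \<in> ssum A C \<Longrightarrow> (\<And>a b. a \<in> A \<Longrightarrow> b \<in> C \<Longrightarrow> x = a + b \<Longrightarrow> P) \<Longrightarrow> P"
  unfolding ssum_def by blast

context vector_space
begin

lemma subspace_ssum:
  assumes A: "subspace A" and C: "subspace C"
  shows "subspace (ssum A C)"
proof -
  have "0 \<in> ssum A C"
    using ssumI[of 0 A 0 C] subspace_0[OF A] subspace_0[OF C] by simp
  moreover have "x + y \<in> ssum A C" if x: "x \<in> ssum A C" and y: "y \<in> ssum A C" for x y
  proof -
    obtain a b where "a \<in> A" "b \<in> C" "x = a + b"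
      using x by (rule ssumE)
    moreover obtain a' b' where "a' \<in> A" "b' \<in> C" "y = a' + b'"
      using y by (rule ssumE)
    ultimately have "x + y = (a + a') + (b + b')" and "a + a' \<in> A" and "b + b' \<in> C"
      using subspace_add[OF A] subspace_add[OF C] by (simp_all add: add_ac)
    then show ?thesis
      by (simp add: ssumI)
  qed
  moreover have "scale c x \<in> ssum A C" if x: "x \<in> ssum A C" for c x
  proof -
    obtain a b where "a \<in> A" "b \<in> C" "x = a + b"
      using x by (rule ssumE)
    then show ?thesis
      using ssumI[of "scale c a" A "scale c b" C] subspace_scale[OF A] subspace_scale[OF C]
      by (simp add: scale_right_distrib)
  qed
  ultimately show ?thesis unfolding subspace_def by blast
qed

lemma span_insert_shift: "span (insert w ((\<lambda>x. x - scale (c x) w) ` F)) = span (insert w F)"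
proof -
  have "x - scale (c x) w \<in> span (insert w F)" if "x \<in> F" for x
    using that by (simp add: span_base span_diff span_scale)
  moreover have "x \<in> span (insert w ((\<lambda>x. x - scale (c x) w) ` F))" if "x \<in> F" for x
  proof -
    have "x - scale (c x) w \<in> span (insert w ((\<lambda>x. x - scale (c x) w) ` F))"
      using that by (intro span_base) auto
    moreover have "scale (c x) w \<in> span (insert w ((\<lambda>x. x - scale (c x) w) ` F))"
      by (intro span_scale span_base) simp
    ultimately show ?thesis
      using span_add by fastforce
  qed
  ultimately show ?thesis
    by (intro span_eq[THEN iffD2] conjI) (auto intro: span_base)
qed

end

lemma quotient_not_in_Ints_eventually:
  fixes a s :: complex
  assumes "s \<noteq> 0"
  obtains M :: int where "\<And>n. M < \<bar>n\<bar> \<Longrightarrow> 2 * s / (a + 2 * of_int n * s) \<notin> \<int>"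
proof
  define M where "M = \<lceil>(cmod a + 2 * cmod s) / (2 * cmod s)\<rceil>"
  fix n :: int assume "M < \<bar>n\<bar>"
  have s: "cmod s > 0" using assms by simp
  have "(cmod a + 2 * cmod s) / (2 * cmod s) + 1 \<le> real_of_int \<bar>n\<bar>"
    using \<open>M < \<bar>n\<bar>\<close> unfolding M_def by linarith
  then have "cmod a + 4 * cmod s \<le> real_of_int \<bar>n\<bar> * (2 * cmod s)"
    using s by (simp add: field_simps)
  also have "\<dots> = cmod (2 * of_int n * s)" by (simp add: norm_mult)
  also have "\<dots> \<le> cmod (a + 2 * of_int n * s) + cmod a"
    using norm_triangle_ineq4[of "a + 2 * of_int n * s" a] by simp
  finally have less: "2 * cmod s < cmod (a + 2 * of_int n * s)" using s by linarith
  show "2 * s / (a + 2 * of_int n * s) \<notin> \<int>"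
  proof
    assume "2 * s / (a + 2 * of_int n * s) \<in> \<int>"
    then obtain m where m: "2 * s / (a + 2 * of_int n * s) = of_int m" by (elim Ints_cases)
    have "\<bar>real_of_int m\<bar> = 2 * cmod s / cmod (a + 2 * of_int n * s)"
      using arg_cong[OF m, of cmod] by (simp add: norm_divide)
    also have "\<dots> < 1" using less s by (simp add: divide_less_eq)
    finally have "m = 0" by linarith
    then show False using m less assms by auto
  qed
qed

lemma rspan_base: "a \<in> S \<Longrightarrow> a \<in> rspan S"
  unfolding rspan_def by (intro CollectI exI[of _ "{a}"] exI[of _ "\<lambda>_. 1::real"]) auto

locale sym_bilinear_form = vector_space sc for sc :: "complex \<Rightarrow> 'a::ab_group_add \<Rightarrow> 'a" +
  fixes B :: "'a \<Rightarrow> 'a \<Rightarrow> complex"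
  assumes bilinear: "cbilinear_form sc B"
    and symmetric: "B x y = B y x"
begin

lemma B_add_left: "B (x + y) z = B x z + B y z"
  and B_add_right: "B x (y + z) = B x y + B x z"
  and B_scale_left: "B (sc c x) y = c * B x y"
  and B_scale_right: "B x (sc c y) = c * B x y"
  using bilinear unfolding cbilinear_form_def by blast+

lemma B_zero_left [simp]: "B 0 x = 0"
  using B_add_left[of 0 0 x] by simp

lemma B_zero_right [simp]: "B x 0 = 0"
  using B_add_right[of x 0 0] by simp

lemma B_minus_left: "B (- x) y = - B x y"
  using B_add_left[of x "- x" y] by (simp add: add_eq_0_iff)

lemma B_minus_right: "B x (- y) = - B x y"
  using B_add_right[of x y "- y"] by (simp add: add_eq_0_iff)

lemma B_diff_right: "B x (y - z) = B x y - B x z"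
  using B_add_right[of x y "- z"] by (simp add: B_minus_right)

lemma B_sum_right: "B x (sum f S) = (\<Sum>i\<in>S. B x (f i))"
  by (induction S rule: infinite_finite_induct) (auto simp: B_add_right)

lemmas B_linear = B_add_left B_add_right B_scale_left B_scale_right B_minus_left B_minus_right

definition nondegenerate_on :: "'a set \<Rightarrow> bool" where
  "nondegenerate_on S \<longleftrightarrow> (\<forall>x\<in>S. (\<forall>y\<in>S. B x y = 0) \<longrightarrow> x = 0)"

definition orthogonal_set :: "'a set \<Rightarrow> bool" where
  "orthogonal_set Q \<longleftrightarrow> (\<forall>p\<in>Q. \<forall>q\<in>Q. p \<noteq> q \<longrightarrow> B p q = 0)"

lemma B_eq_0_on_spans:
  assumes "\<forall>s\<in>S. \<forall>t\<in>T. B s t = 0" "x \<in> span S" "y \<in> span T"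
  shows "B x y = 0"
proof -
  have "\<forall>y\<in>span T. B x y = 0"
  proof (rule span_induct[OF assms(2)])
    show "subspace {x. \<forall>y\<in>span T. B x y = 0}"
      by (auto simp: subspace_def B_linear)
    fix s assume "s \<in> S"
    show "\<forall>y\<in>span T. B s y = 0"
    proof
      fix y assume "y \<in> span T"
      then show "B s y = 0"
        by (rule span_induct) (use assms(1) \<open>s \<in> S\<close> in \<open>auto simp: subspace_def B_linear\<close>)
    qed
  qed
  then show ?thesis using assms(3) by blast
qed

lemma B_projection_orthogonal: "B w w \<noteq> 0 \<Longrightarrow> B w (x - sc (B x w / B w w) w) = 0"
  by (simp add: B_diff_right B_scale_right symmetric[of x w])

text \<open>If all vectors of F are isotropic, \<open>f + g\<close> is anisotropic whenever \<open>(f, g) \<noteq> 0\<close>.\<close>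
lemma anisotropic_exchange:
  assumes F: "finite F" and fg: "f \<in> F" "g \<in> F" "B f g \<noteq> 0"
  shows "\<exists>w F0. finite F0 \<and> card F0 < card F \<and> B w w \<noteq> 0 \<and> span (insert w F0) = span F"
proof (cases "\<exists>h\<in>F. B h h \<noteq> 0")
  case True
  then obtain h where "h \<in> F" "B h h \<noteq> 0" by blast
  moreover have "span (insert h (F - {h})) = span F"
    using \<open>h \<in> F\<close> by (simp add: insert_absorb)
  ultimately show ?thesis
    using F card_Diff1_less[OF F \<open>h \<in> F\<close>] by blast
next
  case False
  then have "B (f + g) (f + g) = 2 * B f g"
    using fg by (simp add: B_add_left B_add_right symmetric[of g f])
  then have "B (f + g) (f + g) \<noteq> 0" using fg(3) by simp
  moreover have "f \<noteq> g" using False fg by blast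
  then have "span (insert (f + g) (F - {g})) = span F"
  proof (intro span_eq[THEN iffD2] conjI)
    show "insert (f + g) (F - {g}) \<subseteq> span F"
      using fg by (auto intro: span_base span_add)
    have "(f + g) - f \<in> span (insert (f + g) (F - {g}))"
      using fg \<open>f \<noteq> g\<close> by (intro span_diff span_base) auto
    then show "F \<subseteq> span (insert (f + g) (F - {g}))"
      by (auto intro: span_base)
  qed
  ultimately show ?thesis
    using F card_Diff1_less[OF F fg(2)] by blast
qed

lemma orthogonal_spanning_set_exists:
  "finite F \<Longrightarrow> \<exists>Q. finite Q \<and> span Q = span F \<and> orthogonal_set Q"
proof (induction "card F" arbitrary: F rule: less_induct)
  case less
  show ?case
  proof (cases "\<exists>f\<in>F. \<exists>g\<in>F. B f g \<noteq> 0")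
    case True
    then obtain w F0 where w: "finite F0" "card F0 < card F" "B w w \<noteq> 0" "span (insert w F0) = span F"
      using anisotropic_exchange[OF less.prems] by blast
    define G where "G = (\<lambda>x. x - sc (B x w / B w w) w) ` F0"
    have "card G < card F"
      unfolding G_def using w(2) card_image_le[OF w(1), of "\<lambda>x. x - sc (B x w / B w w) w"] by linarith
    then obtain Q where Q: "finite Q" "span Q = span G" "orthogonal_set Q"
      using less.hyps w(1) unfolding G_def by blast
    have "\<forall>s\<in>{w}. \<forall>t\<in>G. B s t = 0"
      using B_projection_orthogonal[OF w(3)] unfolding G_def by blast
    then have wQ: "B w q = 0" if "q \<in> Q" for q
      using B_eq_0_on_spans span_base[of w "{w}"] Q(2) span_base[OF that] by blast
    have "span (insert w Q) = span (insert w G)"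
      by (simp only: span_insert Q(2))
    also have "\<dots> = span F"
      unfolding G_def using span_insert_shift[where c = "\<lambda>x. B x w / B w w"] w(4) by simp
    finally have "span (insert w Q) = span F" .
    moreover have "orthogonal_set (insert w Q)"
      using Q(3) wQ symmetric[of _ w] unfolding orthogonal_set_def by (metis insert_iff)
    ultimately show ?thesis using Q(1) by blast
  next
    case False
    then show ?thesis using less.prems unfolding orthogonal_set_def by blast
  qed
qed

lemma riesz_representation:
  assumes G: "finite G" and nondeg: "nondegenerate_on (span G)"
    and add: "\<forall>x\<in>span G. \<forall>y\<in>span G. \<phi> (x + y) = \<phi> x + \<phi> y"
    and scale: "\<forall>c. \<forall>x\<in>span G. \<phi> (sc c x) = c * \<phi> x"
  shows "\<exists>u\<in>span G. \<forall>w\<in>span G. \<phi> w = B w u"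
proof -
  obtain Q where Q: "finite Q" "span Q = span G" "orthogonal_set Q"
    using orthogonal_spanning_set_exists[OF G] by blast
  have "\<phi> 0 = \<phi> 0 + \<phi> 0"
    using add span_zero by fastforce
  then have \<phi>0: "\<phi> 0 = 0" by simp
  define Q1 where "Q1 = {p\<in>Q. B p p \<noteq> 0}"
  define u where "u = (\<Sum>p\<in>Q1. sc (\<phi> p / B p p) p)"
  have "u \<in> span G"
    unfolding u_def Q(2)[symmetric] Q1_def by (intro span_sum span_scale span_base) auto
  moreover have "\<phi> q = B q u" if q: "q \<in> Q" for q
  proof (cases "q \<in> Q1")
    case True
    have "B q u = (\<Sum>p\<in>Q1. (\<phi> p / B p p) * B q p)"
      unfolding u_def by (simp add: B_sum_right B_scale_right)
    also have "\<dots> = (\<phi> q / B q q) * B q q + (\<Sum>p\<in>Q1 - {q}. (\<phi> p / B p p) * B q p)"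
      using True Q(1) unfolding Q1_def by (simp add: sum.remove)
    also have "(\<Sum>p\<in>Q1 - {q}. (\<phi> p / B p p) * B q p) = 0"
      using Q(3) q unfolding Q1_def orthogonal_set_def by (intro sum.neutral) auto
    finally show ?thesis using True unfolding Q1_def by simp
  next
    case False
    then have "\<forall>s\<in>{q}. \<forall>t\<in>Q. B s t = 0"
      using Q(3) q unfolding Q1_def orthogonal_set_def by auto
    then have "\<forall>w\<in>span G. B q w = 0"
      using B_eq_0_on_spans[of "{q}" Q q] Q(2) by (auto intro: span_base)
    then have "q = 0"
      using nondeg q Q(2) span_base[of q Q] unfolding nondegenerate_on_def by auto
    then show ?thesis using \<phi>0 by simp
  qed
  moreover have "\<phi> w = B w u" if "w \<in> span G" for w
  proof -
    have "subspace {w. w \<in> span G \<and> \<phi> w = B w u}"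
      using add scale \<phi>0 by (auto simp: subspace_def B_add_left B_scale_left span_zero span_add span_scale)
    moreover have "w \<in> span Q" using that Q(2) by simp
    ultimately show ?thesis
      using span_induct[of w Q "\<lambda>w. w \<in> span G \<and> \<phi> w = B w u"]
        \<open>\<And>q. q \<in> Q \<Longrightarrow> \<phi> q = B q u\<close> Q(2) span_base by blast
  qed
  ultimately show ?thesis by blast
qed

lemma orthogonal_projection_exists:
  assumes "finite G" "nondegenerate_on (span G)"
  shows "\<exists>u\<in>span G. \<forall>w\<in>span G. B w (y - u) = 0"
proof -
  obtain u where "u \<in> span G" "\<forall>w\<in>span G. B w y = B w u"
    using riesz_representation[OF assms, of "\<lambda>w. B w y"] by (auto simp: B_add_left B_scale_left)
  then show ?thesis by (auto simp: B_diff_right)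
qed

end

section \<open>Root spaces of an extended affine Lie algebra\<close>

locale lie_alg = vector_space sc for sc :: "complex \<Rightarrow> 'a::ab_group_add \<Rightarrow> 'a" +
  fixes br :: "'a \<Rightarrow> 'a \<Rightarrow> 'a"
  assumes lie: "lie_algebra sc br"
begin

lemma br_add_left: "br (x + y) z = br x z + br y z"
  and br_add_right: "br x (y + z) = br x y + br x z"
  and br_scale_left: "br (sc c x) y = sc c (br x y)"
  and br_scale_right: "br x (sc c y) = sc c (br x y)"
  using lie unfolding lie_algebra_def cbilinear_def by blast+

lemma br_self: "br x x = 0"
  and jacobi: "br x (br y z) + br y (br z x) + br z (br x y) = 0"
  using lie unfolding lie_algebra_def by blast+

lemma br_zero_left [simp]: "br 0 x = 0"
  using br_add_left[of 0 0 x] by simp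

lemma br_zero_right [simp]: "br x 0 = 0"
  using br_add_right[of x 0 0] by simp

lemma br_antisym: "br x y = - br y x"
proof -
  have "br (x + y) (x + y) = br x x + br x y + (br y x + br y y)"
    by (simp add: br_add_left br_add_right)
  then have "br x y + br y x = 0" by (simp add: br_self)
  then show ?thesis by (simp add: eq_neg_iff_add_eq_0)
qed

lemma br_minus_right: "br x (- y) = - br x y"
  using br_add_right[of x y "- y"] br_antisym[of x y] by (simp add: add_eq_0_iff)

lemma br_leibniz: "br h (br x y) = br (br h x) y + br x (br h y)"
  using jacobi[of h x y] br_antisym[of y h] br_antisym[of "br h x" y] br_minus_right[of x "br h y"]
  by (simp add: algebra_simps add_eq_0_iff)

end

locale eala = vector_space sc for sc :: "complex \<Rightarrow> 'a::ab_group_add \<Rightarrow> 'a" +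
  fixes br :: "'a \<Rightarrow> 'a \<Rightarrow> 'a" and B :: "'a \<Rightarrow> 'a \<Rightarrow> complex" and H :: "'a set"
  assumes EALA: "EALA sc br B H"

sublocale eala \<subseteq> sym_bilinear_form sc B
proof
  show "cbilinear_form sc B"
    using EALA unfolding EALA_def by (elim conjE)
  have "\<forall>x y. B x y = B y x"
    using EALA unfolding EALA_def by (elim conjE)
  then show "B x y = B y x" for x y by blast
qed

sublocale eala \<subseteq> lie_alg sc br
  using EALA unfolding EALA_def by unfold_locales (elim conjE)

context eala
begin

abbreviation E :: "('a \<Rightarrow> complex) \<Rightarrow> 'a set" where "E \<equiv> rootsp sc br H"
abbreviation tv :: "('a \<Rightarrow> complex) \<Rightarrow> 'a" where "tv \<equiv> tvec B H"
abbreviation "Rx \<equiv> nonisotropic_roots sc br B H"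
abbreviation "R0 \<equiv> isotropic_roots sc br B H"
abbreviation "Hc \<equiv> span (tv ` Rx)"
abbreviation "H0 \<equiv> span (tv ` R0)"
abbreviation "Ec \<equiv> core sc br B H"

lemma B_invariant [rule_format]: "\<forall>x y z. B (br x y) z = B x (br y z)"
  using EALA unfolding EALA_def by (elim conjE)

lemma B_nondegenerate [rule_format]: "\<forall>x. (\<forall>y. B x y = 0) \<longrightarrow> x = 0"
  using EALA unfolding EALA_def by (elim conjE)

lemma subspace_H: "subspace H"
  using EALA unfolding EALA_def subalgebra_def by (elim conjE)

lemma H_finitely_spanned: "\<exists>F. finite F \<and> F \<subseteq> H \<and> span F = H"
  using EALA unfolding EALA_def by (elim conjE)

lemma root_space_decomposition [rule_format]:
  "\<forall>x. \<exists>S f. finite S \<and> S \<subseteq> Hdual sc H \<and> (\<forall>\<alpha>\<in>S. f \<alpha> \<in> E \<alpha>) \<and> x = (\<Sum>\<alpha>\<in>S. f \<alpha>)"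
  using EALA unfolding EALA_def by (elim conjE)

lemma E_zero: "E (\<lambda>_. 0) = H"
  using EALA unfolding EALA_def by (elim conjE)

lemma ad_locally_nilpotent [rule_format]: "\<forall>\<alpha>\<in>Rx. \<forall>x\<in>E \<alpha>. \<forall>y. \<exists>n. (br x ^^ n) y = 0"
  using EALA unfolding EALA_def by (elim conjE)

lemma isotropic_root_non_isolated [rule_format]:
  "\<forall>\<sigma>\<in>R0. \<exists>\<alpha>\<in>Rx. (\<lambda>x. \<sigma> x + \<alpha> x) \<in> roots sc br H"
  using EALA unfolding EALA_def by (elim conjE)

lemma finitely_spanned_subspace:
  assumes "subspace U" "U \<subseteq> H" shows "\<exists>G. finite G \<and> span G = U"
proof -
  obtain F where F: "finite F" "span F = H" using H_finitely_spanned by blast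
  obtain G where G: "G \<subseteq> U" "independent G" "U \<subseteq> span G" "card G = dim U"
    using basis_exists[of U] by blast
  have "G \<subseteq> span F" using G(1) assms(2) F(2) by blast
  then have "finite G" using independent_span_bound[OF F(1) G(2)] by blast
  moreover have "span G = U" by (rule span_subspace[OF G(1) G(3) assms(1)])
  ultimately show ?thesis by blast
qed

lemma E_bracket_H: "x \<in> E \<alpha> \<Longrightarrow> h \<in> H \<Longrightarrow> br h x = sc (\<alpha> h) x"
  unfolding rootsp_def by blast

lemma subspace_E: "subspace (E \<alpha>)"
  unfolding subspace_def rootsp_def
  by (auto simp: br_add_right br_scale_right scale_right_distrib mult.commute)

lemma E_bracket:
  assumes x: "x \<in> E \<alpha>" and y: "y \<in> E \<beta>"
  shows "br x y \<in> E (\<lambda>z. \<alpha> z + \<beta> z)"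
  unfolding rootsp_def
proof (intro CollectI ballI)
  fix h assume h: "h \<in> H"
  have "br h (br x y) = br (br h x) y + br x (br h y)" by (rule br_leibniz)
  also have "\<dots> = sc (\<alpha> h + \<beta> h) (br x y)"
    using E_bracket_H[OF x h] E_bracket_H[OF y h] by (simp add: br_scale_left br_scale_right scale_left_distrib)
  finally show "br h (br x y) = sc (\<alpha> h + \<beta> h) (br x y)" .
qed

lemma E_iterated_bracket:
  "x \<in> E \<alpha> \<Longrightarrow> w \<in> E \<mu> \<Longrightarrow> (br x ^^ k) w \<in> E (\<lambda>z. \<mu> z + of_nat k * \<alpha> z)"
proof (induction k)
  case (Suc k)
  have "br x ((br x ^^ k) w) \<in> E (\<lambda>z. \<alpha> z + (\<mu> z + of_nat k * \<alpha> z))"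
    by (rule E_bracket[OF Suc.prems(1) Suc.IH[OF Suc.prems]])
  then show ?case by (simp add: algebra_simps)
qed simp

lemma Hdual_zero: "(\<lambda>_. 0) \<in> Hdual sc H"
  unfolding Hdual_def by auto

lemma Hdual_outside_H: "\<alpha> \<in> Hdual sc H \<Longrightarrow> x \<notin> H \<Longrightarrow> \<alpha> x = 0"
  unfolding Hdual_def by blast

lemma Hdual_lincomb:
  "\<alpha> \<in> Hdual sc H \<Longrightarrow> \<beta> \<in> Hdual sc H \<Longrightarrow> (\<lambda>x. a * \<alpha> x + b * \<beta> x) \<in> Hdual sc H"
  unfolding Hdual_def by (auto simp: algebra_simps)

lemma Hdual_sum:
  "finite F \<Longrightarrow> F \<subseteq> Hdual sc H \<Longrightarrow> (\<lambda>x. \<Sum>\<alpha>\<in>F. c \<alpha> * \<alpha> x) \<in> Hdual sc H"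
proof (induction F rule: finite_induct)
  case (insert \<alpha> F)
  then show ?case
    using Hdual_lincomb[of \<alpha> "\<lambda>x. \<Sum>\<alpha>\<in>F. c \<alpha> * \<alpha> x" "c \<alpha>" 1] by simp
qed (simp add: Hdual_zero)

lemma B_E_orthogonal:
  assumes \<alpha>: "\<alpha> \<in> Hdual sc H" and \<beta>: "\<beta> \<in> Hdual sc H"
    and x: "x \<in> E \<alpha>" and y: "y \<in> E \<beta>" and ne: "(\<lambda>z. \<alpha> z + \<beta> z) \<noteq> (\<lambda>_. 0)"
  shows "B x y = 0"
proof -
  obtain h where h: "\<alpha> h + \<beta> h \<noteq> 0" using ne by auto
  then have "h \<in> H" using Hdual_outside_H[OF \<alpha>] Hdual_outside_H[OF \<beta>] by force
  have "\<alpha> h * B x y = B (br h x) y" using E_bracket_H[OF x \<open>h \<in> H\<close>] by (simp add: B_scale_left)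
  also have "\<dots> = - B x (br h y)" by (simp add: br_antisym[of h x] B_minus_left B_invariant)
  also have "\<dots> = - \<beta> h * B x y" using E_bracket_H[OF y \<open>h \<in> H\<close>] by (simp add: B_scale_right)
  finally have "(\<alpha> h + \<beta> h) * B x y = 0" by (simp add: algebra_simps)
  with h show ?thesis by simp
qed

lemma B_E_zero_orthogonal:
  "\<alpha> \<in> Hdual sc H \<Longrightarrow> \<alpha> \<noteq> (\<lambda>_. 0) \<Longrightarrow> h \<in> H \<Longrightarrow> x \<in> E \<alpha> \<Longrightarrow> B h x = 0"
  using B_E_orthogonal[OF Hdual_zero, of \<alpha> h x] E_zero by simp

lemma nondegenerate_on_H: "nondegenerate_on H"
  unfolding nondegenerate_on_def
proof (intro ballI impI)
  fix t assume t: "t \<in> H" and o: "\<forall>h\<in>H. B t h = 0"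
  have "B t y = 0" for y
  proof -
    obtain S f where S: "finite S" "S \<subseteq> Hdual sc H" "\<forall>\<alpha>\<in>S. f \<alpha> \<in> E \<alpha>" "y = (\<Sum>\<alpha>\<in>S. f \<alpha>)"
      using root_space_decomposition[of y] by blast
    have "B t (f \<alpha>) = 0" if "\<alpha> \<in> S" for \<alpha>
      using o B_E_zero_orthogonal[of \<alpha> t "f \<alpha>"] E_zero S(2,3) t that by (cases "\<alpha> = (\<lambda>_. 0)") auto
    then show "B t y = 0" using S(4) by (simp add: B_sum_right)
  qed
  then show "t = 0"
    by (rule B_nondegenerate)
qed

lemma nondegenerate_on_HD: "t \<in> H \<Longrightarrow> (\<And>h. h \<in> H \<Longrightarrow> B h t = 0) \<Longrightarrow> t = 0"
  using nondegenerate_on_H unfolding nondegenerate_on_def by (simp add: symmetric[of t])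

lemma tvec_unique: "t \<in> H \<Longrightarrow> t' \<in> H \<Longrightarrow> \<forall>h\<in>H. B h t = B h t' \<Longrightarrow> t = t'"
  using nondegenerate_on_HD[of "t - t'"] subspace_diff[OF subspace_H] by (simp add: B_diff_right)

lemma tvec_exists:
  assumes "\<alpha> \<in> Hdual sc H" shows "\<exists>t\<in>H. \<forall>h\<in>H. \<alpha> h = B h t"
proof -
  obtain F where F: "finite F" "span F = H"
    using H_finitely_spanned by blast
  show ?thesis
    using riesz_representation[OF F(1), of \<alpha>] nondegenerate_on_H assms
    unfolding F(2) Hdual_def by blast
qed

lemma tvec_spec: assumes "\<alpha> \<in> Hdual sc H" shows "tv \<alpha> \<in> H" "\<forall>h\<in>H. \<alpha> h = B h (tv \<alpha>)"
proof -
  have "\<exists>!t. t \<in> H \<and> (\<forall>h\<in>H. \<alpha> h = B h t)"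
    using tvec_exists[OF assms] tvec_unique by metis
  then have "tv \<alpha> \<in> H \<and> (\<forall>h\<in>H. \<alpha> h = B h (tv \<alpha>))"
    unfolding tvec_def by (rule theI')
  then show "tv \<alpha> \<in> H" "\<forall>h\<in>H. \<alpha> h = B h (tv \<alpha>)" by auto
qed

lemma tvec_in_H: "\<alpha> \<in> Hdual sc H \<Longrightarrow> tv \<alpha> \<in> H"
  and tvec_represents: "\<alpha> \<in> Hdual sc H \<Longrightarrow> h \<in> H \<Longrightarrow> \<alpha> h = B h (tv \<alpha>)"
  using tvec_spec by blast+

lemma tvec_eqI: "\<alpha> \<in> Hdual sc H \<Longrightarrow> t \<in> H \<Longrightarrow> \<forall>h\<in>H. \<alpha> h = B h t \<Longrightarrow> tv \<alpha> = t"
  using tvec_spec tvec_unique by metis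

lemma dform_eq: "\<alpha> \<in> Hdual sc H \<Longrightarrow> \<beta> \<in> Hdual sc H \<Longrightarrow> dform B H \<alpha> \<beta> = \<beta> (tv \<alpha>)"
  unfolding dform_def by (simp add: tvec_in_H tvec_represents)

lemma tvec_zero: "tv (\<lambda>_. 0) = 0"
  by (rule tvec_eqI[OF Hdual_zero subspace_0[OF subspace_H]]) simp

lemma tvec_sum:
  assumes F: "finite F" "F \<subseteq> Hdual sc H"
  shows "tv (\<lambda>x. \<Sum>\<alpha>\<in>F. c \<alpha> * \<alpha> x) = (\<Sum>\<alpha>\<in>F. sc (c \<alpha>) (tv \<alpha>))"
proof (rule tvec_eqI)
  show "(\<lambda>x. \<Sum>\<alpha>\<in>F. c \<alpha> * \<alpha> x) \<in> Hdual sc H" by (rule Hdual_sum[OF F])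
  show "(\<Sum>\<alpha>\<in>F. sc (c \<alpha>) (tv \<alpha>)) \<in> H"
    using F tvec_in_H by (intro subspace_sum[OF subspace_H] subspace_scale[OF subspace_H]) auto
  show "\<forall>h\<in>H. (\<Sum>\<alpha>\<in>F. c \<alpha> * \<alpha> h) = B h (\<Sum>\<alpha>\<in>F. sc (c \<alpha>) (tv \<alpha>))"
    using F(2) tvec_represents by (auto simp: B_sum_right B_scale_right intro!: sum.cong)
qed

lemma tvec_lincomb:
  assumes "\<alpha> \<in> Hdual sc H" "\<beta> \<in> Hdual sc H"
  shows "tv (\<lambda>x. a * \<alpha> x + b * \<beta> x) = sc a (tv \<alpha>) + sc b (tv \<beta>)"
proof (rule tvec_eqI[OF Hdual_lincomb[OF assms]])
  show "sc a (tv \<alpha>) + sc b (tv \<beta>) \<in> H"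
    using assms tvec_in_H subspace_H by (simp add: subspace_add subspace_scale)
  show "\<forall>h\<in>H. a * \<alpha> h + b * \<beta> h = B h (sc a (tv \<alpha>) + sc b (tv \<beta>))"
    using assms tvec_represents by (simp add: B_add_right B_scale_right)
qed

lemma inj_on_tvec: "inj_on tv (Hdual sc H)"
proof (rule inj_onI, rule ext)
  fix \<alpha> \<beta> x assume \<alpha>: "\<alpha> \<in> Hdual sc H" and \<beta>: "\<beta> \<in> Hdual sc H" and eq: "tv \<alpha> = tv \<beta>"
  show "\<alpha> x = \<beta> x"
    using tvec_represents[OF \<alpha>] tvec_represents[OF \<beta>] Hdual_outside_H[OF \<alpha>] Hdual_outside_H[OF \<beta>] eq
    by (cases "x \<in> H") auto
qed

lemma span_tvec_subset_H: "S \<subseteq> Hdual sc H \<Longrightarrow> span (tv ` S) \<subseteq> H"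
  using tvec_in_H span_minimal[OF _ subspace_H] by blast

lemma roots_subset_Hdual: "roots sc br H \<subseteq> Hdual sc H"
  unfolding roots_def by blast

lemma nonisotropic_roots_subset: "Rx \<subseteq> roots sc br H"
  unfolding nonisotropic_roots_def by blast

lemma isotropic_roots_subset: "R0 \<subseteq> roots sc br H"
  unfolding isotropic_roots_def by blast

lemma root_vector_exists: "\<alpha> \<in> roots sc br H \<Longrightarrow> \<exists>x\<in>E \<alpha>. x \<noteq> 0"
  using subspace_0[OF subspace_E] unfolding roots_def by blast

lemma rootI: "\<alpha> \<in> Hdual sc H \<Longrightarrow> x \<in> E \<alpha> \<Longrightarrow> x \<noteq> 0 \<Longrightarrow> \<alpha> \<in> roots sc br H"
  unfolding roots_def by blast

lemma E_pairing:
  assumes \<alpha>: "\<alpha> \<in> Hdual sc H" and x: "x \<in> E \<alpha>" "x \<noteq> 0"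
  shows "\<exists>y\<in>E (\<lambda>z. - \<alpha> z). B x y \<noteq> 0"
proof -
  obtain z where "B x z \<noteq> 0"
    using B_nondegenerate x(2) by blast
  moreover obtain S f where S: "finite S" "S \<subseteq> Hdual sc H" "\<forall>\<beta>\<in>S. f \<beta> \<in> E \<beta>" "z = (\<Sum>\<beta>\<in>S. f \<beta>)"
    using root_space_decomposition[of z] by blast
  ultimately obtain \<beta> where \<beta>: "\<beta> \<in> S" "B x (f \<beta>) \<noteq> 0"
    using sum.not_neutral_contains_not_neutral by (metis B_sum_right)
  then have "(\<lambda>z. \<alpha> z + \<beta> z) = (\<lambda>_. 0)"
    using B_E_orthogonal[OF \<alpha> _ x(1)] S(2,3) by blast
  then have "\<beta> = (\<lambda>z. - \<alpha> z)"
    by (metis add_eq_0_iff)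
  then show ?thesis using S(3) \<beta> by auto
qed

lemma Hdual_uminus: "\<alpha> \<in> Hdual sc H \<Longrightarrow> (\<lambda>z. - \<alpha> z) \<in> Hdual sc H"
  using Hdual_lincomb[of \<alpha> \<alpha> "-1" 0] by simp

lemma tvec_uminus: "\<alpha> \<in> Hdual sc H \<Longrightarrow> tv (\<lambda>z. - \<alpha> z) = - tv \<alpha>"
  using tvec_lincomb[of \<alpha> \<alpha> "-1" 0] by simp

lemma roots_uminus:
  assumes "\<alpha> \<in> roots sc br H" shows "(\<lambda>z. - \<alpha> z) \<in> roots sc br H"
proof -
  have \<alpha>: "\<alpha> \<in> Hdual sc H" using assms roots_subset_Hdual by blast
  obtain x where "x \<in> E \<alpha>" "x \<noteq> 0" using root_vector_exists[OF assms] by blast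
  then obtain y where "y \<in> E (\<lambda>z. - \<alpha> z)" "B x y \<noteq> 0" using E_pairing[OF \<alpha>] by blast
  then show ?thesis using rootI[OF Hdual_uminus[OF \<alpha>]] by force
qed

lemma nonisotropic_roots_uminus:
  assumes "\<beta> \<in> Rx" shows "(\<lambda>z. - \<beta> z) \<in> Rx"
proof -
  have "\<beta> \<in> Hdual sc H" using assms nonisotropic_roots_subset roots_subset_Hdual by blast
  then have "dform B H (\<lambda>z. - \<beta> z) (\<lambda>z. - \<beta> z) = dform B H \<beta> \<beta>"
    unfolding dform_def by (simp add: tvec_uminus B_minus_left B_minus_right)
  then show ?thesis
    using assms roots_uminus unfolding nonisotropic_roots_def by auto
qed

lemma isotropic_root_at_own_tvec: "\<sigma> \<in> R0 \<Longrightarrow> \<sigma> (tv \<sigma>) = 0"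
  using dform_eq[of \<sigma> \<sigma>] isotropic_roots_subset roots_subset_Hdual
  unfolding isotropic_roots_def nonisotropic_roots_def by auto

lemma bracket_opposite_E:
  assumes \<alpha>: "\<alpha> \<in> Hdual sc H" and x: "x \<in> E \<alpha>" and y: "y \<in> E (\<lambda>z. - \<alpha> z)"
  shows "br x y = sc (B x y) (tv \<alpha>)"
proof -
  have "br x y \<in> H"
    using E_bracket[OF x y] E_zero by simp
  moreover have "B h (br x y) = B h (sc (B x y) (tv \<alpha>))" if h: "h \<in> H" for h
  proof -
    have "B h (br x y) = B (br h x) y" by (simp add: B_invariant)
    also have "\<dots> = \<alpha> h * B x y" using E_bracket_H[OF x h] by (simp add: B_scale_left)
    finally show ?thesis using tvec_represents[OF \<alpha> h] by (simp add: B_scale_right)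
  qed
  ultimately show ?thesis
    using tvec_unique tvec_in_H[OF \<alpha>] subspace_scale[OF subspace_H] by blast
qed

lemma sl2_pair_exists:
  assumes "\<beta> \<in> roots sc br H"
  shows "\<exists>e\<in>E \<beta>. \<exists>f\<in>E (\<lambda>z. - \<beta> z). br e f = tv \<beta>"
proof -
  have \<beta>: "\<beta> \<in> Hdual sc H" using assms roots_subset_Hdual by blast
  obtain e where e: "e \<in> E \<beta>" "e \<noteq> 0" using root_vector_exists[OF assms] by blast
  then obtain y where y: "y \<in> E (\<lambda>z. - \<beta> z)" "B e y \<noteq> 0" using E_pairing[OF \<beta>] by blast
  define f where "f = sc (1 / B e y) y"
  have "f \<in> E (\<lambda>z. - \<beta> z)"
    unfolding f_def using y(1) subspace_scale[OF subspace_E] by blast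
  moreover have "br e f = tv \<beta>"
    using bracket_opposite_E[OF \<beta> e(1) \<open>f \<in> _\<close>] y(2) unfolding f_def by (simp add: B_scale_right)
  ultimately show ?thesis using e(1) by blast
qed

lemma sl2_raise_lowered:
  assumes e: "e \<in> E \<beta>" and f: "f \<in> E (\<lambda>z. - \<beta> z)" and ef: "br e f = t" and t: "t \<in> H"
    and v: "v \<in> E \<mu>" and ev: "br e v = 0"
  shows "br e ((br f ^^ Suc j) v) = sc (of_nat (Suc j) * (\<mu> t - of_nat j * \<beta> t / 2)) ((br f ^^ j) v)"
proof (induction j)
  have "br t v = sc (\<mu> t) v" by (rule E_bracket_H[OF v t])
  then show "br e ((br f ^^ Suc 0) v) = sc (of_nat (Suc 0) * (\<mu> t - of_nat 0 * \<beta> t / 2)) ((br f ^^ 0) v)"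
    using br_leibniz[of e f v] ef ev by simp
next
  case (Suc j)
  let ?w = "\<lambda>j. (br f ^^ j) v"
  have "?w (Suc j) \<in> E (\<lambda>z. \<mu> z + of_nat (Suc j) * - \<beta> z)"
    by (rule E_iterated_bracket[OF f v])
  then have "br t (?w (Suc j)) = sc (\<mu> t - of_nat (Suc j) * \<beta> t) (?w (Suc j))"
    using E_bracket_H[OF _ t] by (simp add: algebra_simps)
  then have "br e (?w (Suc (Suc j)))
      = sc ((\<mu> t - of_nat (Suc j) * \<beta> t) + of_nat (Suc j) * (\<mu> t - of_nat j * \<beta> t / 2)) (?w (Suc j))"
    using br_leibniz[of e f "?w (Suc j)"] ef Suc by (simp add: br_scale_right scale_left_distrib)
  also have "(\<mu> t - of_nat (Suc j) * \<beta> t) + of_nat (Suc j) * (\<mu> t - of_nat j * \<beta> t / 2)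
      = of_nat (Suc (Suc j)) * (\<mu> t - of_nat (Suc j) * \<beta> t / 2)"
    by (simp add: field_simps)
  finally show ?case .
qed

lemma sl2_string_weight:
  assumes e: "e \<in> E \<beta>" and f: "f \<in> E (\<lambda>z. - \<beta> z)" and ef: "br e f = t" and t: "t \<in> H"
    and v: "v \<in> E \<mu>" "v \<noteq> 0" and ev: "br e v = 0" and fv: "(br f ^^ m) v = 0"
  shows "\<exists>j::nat. 2 * \<mu> t = of_nat j * \<beta> t"
proof -
  obtain j where j: "(br f ^^ j) v \<noteq> 0" "(br f ^^ Suc j) v = 0"
    using ex_least_nat_less[of "\<lambda>k. (br f ^^ k) v = 0" m] fv v(2) by auto
  then have "sc (of_nat (Suc j) * (\<mu> t - of_nat j * \<beta> t / 2)) ((br f ^^ j) v) = 0"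
    using sl2_raise_lowered[OF e f ef t v(1) ev, of j] by simp
  then have "of_nat (Suc j) * (\<mu> t - of_nat j * \<beta> t / 2) = 0"
    using j(1) by simp
  then have "\<mu> t - of_nat j * \<beta> t / 2 = 0"
    by (metis mult_eq_0_iff of_nat_eq_0_iff nat.simps(3))
  then show ?thesis by (intro exI[of _ j]) (simp add: field_simps)
qed

lemma nonisotropic_root_integrality:
  assumes \<beta>: "\<beta> \<in> Rx" and \<gamma>: "\<gamma> \<in> roots sc br H"
  shows "2 * \<gamma> (tv \<beta>) / \<beta> (tv \<beta>) \<in> \<int>"
proof -
  have \<beta>R: "\<beta> \<in> roots sc br H" using \<beta> nonisotropic_roots_subset by blast
  then have \<beta>H: "\<beta> \<in> Hdual sc H" using roots_subset_Hdual by blast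
  have \<beta>0: "\<beta> (tv \<beta>) \<noteq> 0"
    using \<beta> dform_eq[OF \<beta>H \<beta>H] unfolding nonisotropic_roots_def by simp
  obtain e f where e: "e \<in> E \<beta>" and f: "f \<in> E (\<lambda>z. - \<beta> z)" and ef: "br e f = tv \<beta>"
    using sl2_pair_exists[OF \<beta>R] by blast
  obtain u where u: "u \<in> E \<gamma>" "u \<noteq> 0" using root_vector_exists[OF \<gamma>] by blast
  obtain n where "(br e ^^ n) u = 0"
    using ad_locally_nilpotent[OF \<beta> e] by blast
  then obtain p where p: "(br e ^^ p) u \<noteq> 0" "(br e ^^ Suc p) u = 0"
    using ex_least_nat_less[of "\<lambda>k. (br e ^^ k) u = 0" n] u(2) by auto
  define v where "v = (br e ^^ p) u"
  have v: "v \<in> E (\<lambda>z. \<gamma> z + of_nat p * \<beta> z)"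
    unfolding v_def by (rule E_iterated_bracket[OF e u(1)])
  obtain m where "(br f ^^ m) v = 0"
    using ad_locally_nilpotent[OF nonisotropic_roots_uminus[OF \<beta>] f] by blast
  then obtain j :: nat where "2 * (\<gamma> (tv \<beta>) + of_nat p * \<beta> (tv \<beta>)) = of_nat j * \<beta> (tv \<beta>)"
    using sl2_string_weight[OF e f ef tvec_in_H[OF \<beta>H] v] p unfolding v_def by auto
  then have "2 * \<gamma> (tv \<beta>) / \<beta> (tv \<beta>) = of_int (int j - 2 * int p)"
    using \<beta>0 by (simp add: field_simps)
  then show ?thesis by (metis Ints_of_int)
qed

section \<open>Isotropic roots\<close>

lemma isotropic_root_string_infinite:
  assumes \<sigma>: "\<sigma> \<in> R0" and \<alpha>: "\<alpha> \<in> roots sc br H" and s: "\<alpha> (tv \<sigma>) \<noteq> 0"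
  shows "infinite {n::int. (\<lambda>z. \<alpha> z + of_int n * \<sigma> z) \<in> roots sc br H}" (is "infinite ?N")
proof
  assume fin: "finite ?N"
  define \<rho> where "\<rho> n = (\<lambda>z. \<alpha> z + of_int n * \<sigma> z)" for n :: int
  have \<sigma>R: "\<sigma> \<in> roots sc br H" using \<sigma> isotropic_roots_subset by blast
  have \<sigma>H: "\<sigma> \<in> Hdual sc H" and \<alpha>H: "\<alpha> \<in> Hdual sc H"
    using \<sigma>R \<alpha> roots_subset_Hdual by blast+
  have \<rho>H: "\<rho> n \<in> Hdual sc H" for n
    unfolding \<rho>_def using Hdual_lincomb[OF \<alpha>H \<sigma>H, of 1 "of_int n"] by simp
  have E_trivial: "x = 0" if "n \<notin> ?N" "x \<in> E (\<rho> n)" for n x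
    using that \<rho>H unfolding \<rho>_def roots_def by blast
  have "0 \<in> ?N" using \<alpha> by simp
  define n1 where "n1 = Max ?N"
  have "n1 \<in> ?N" unfolding n1_def using Max_in[OF fin] \<open>0 \<in> ?N\<close> by blast
  then obtain v where v: "v \<in> E (\<rho> n1)" "v \<noteq> 0"
    using root_vector_exists unfolding \<rho>_def by blast
  obtain e f where e: "e \<in> E \<sigma>" and f: "f \<in> E (\<lambda>z. - \<sigma> z)" and ef: "br e f = tv \<sigma>"
    using sl2_pair_exists[OF \<sigma>R] by blast
  have "br e v \<in> E (\<rho> (n1 + 1))"
    using E_bracket[OF e v(1)] unfolding \<rho>_def by (simp add: algebra_simps)
  moreover have "n1 + 1 \<notin> ?N"
    using Max_ge[OF fin, of "n1 + 1"] unfolding n1_def by linarith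
  ultimately have ev: "br e v = 0" using E_trivial by blast
  define K where "K = Suc (nat (n1 - Min ?N))"
  have "(br f ^^ K) v \<in> E (\<rho> (n1 - int K))"
    using E_iterated_bracket[OF f v(1), of K] unfolding \<rho>_def by (simp add: algebra_simps)
  moreover have "n1 - int K \<notin> ?N"
    using Min_le[OF fin, of "n1 - int K"] Min_le[OF fin \<open>n1 \<in> ?N\<close>] unfolding K_def by linarith
  ultimately have "(br f ^^ K) v = 0" using E_trivial by blast
  then obtain j :: nat where "2 * \<rho> n1 (tv \<sigma>) = of_nat j * \<sigma> (tv \<sigma>)"
    using sl2_string_weight[OF e f ef tvec_in_H[OF \<sigma>H] v ev] by blast
  then show False
    using s isotropic_root_at_own_tvec[OF \<sigma>] unfolding \<rho>_def by simp
qed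

text \<open>If \<open>\<alpha>(t\<^sub>\<sigma>) \<noteq> 0\<close>, then for \<open>|n|\<close> large the root \<open>\<alpha> + n\<sigma>\<close> is nonisotropic, with
  \<open>(\<alpha> + n\<sigma>, \<alpha> + n\<sigma>) = (\<alpha>, \<alpha>) + 2n \<alpha>(t\<^sub>\<sigma>)\<close>, and the integrality of \<open>2 \<sigma>(t\<^sub>\<beta>) / \<beta>(t\<^sub>\<beta>)\<close>
  fails for it.\<close>
lemma root_vanishes_at_isotropic_tvec:
  assumes \<sigma>: "\<sigma> \<in> R0" and \<alpha>: "\<alpha> \<in> roots sc br H"
  shows "\<alpha> (tv \<sigma>) = 0"
proof (rule ccontr)
  define s where "s = \<alpha> (tv \<sigma>)"
  define a where "a = \<alpha> (tv \<alpha>)"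
  assume "\<alpha> (tv \<sigma>) \<noteq> 0"
  then have "s \<noteq> 0" unfolding s_def .
  then obtain M where M: "\<And>n. M < \<bar>n\<bar> \<Longrightarrow> 2 * s / (a + 2 * of_int n * s) \<notin> \<int>"
    using quotient_not_in_Ints_eventually by blast
  obtain n where n: "M < \<bar>n\<bar>" "(\<lambda>z. \<alpha> z + of_int n * \<sigma> z) \<in> roots sc br H"
    using isotropic_root_string_infinite[OF \<sigma> \<alpha>] \<open>s \<noteq> 0\<close> unfolding s_def infinite_int_iff_unbounded by blast
  define \<beta> where "\<beta> = (\<lambda>z. \<alpha> z + of_int n * \<sigma> z)"
  have \<sigma>R: "\<sigma> \<in> roots sc br H" using \<sigma> isotropic_roots_subset by blast
  have \<sigma>H: "\<sigma> \<in> Hdual sc H" and \<alpha>H: "\<alpha> \<in> Hdual sc H" and \<beta>H: "\<beta> \<in> Hdual sc H"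
    using \<sigma>R \<alpha> n(2) roots_subset_Hdual unfolding \<beta>_def by blast+
  have t\<beta>: "tv \<beta> = tv \<alpha> + sc (of_int n) (tv \<sigma>)"
    using tvec_lincomb[OF \<alpha>H \<sigma>H, of 1 "of_int n"] unfolding \<beta>_def by simp
  have B_tvecs: "B (tv \<sigma>) (tv \<sigma>) = 0" "B (tv \<sigma>) (tv \<alpha>) = s" "B (tv \<alpha>) (tv \<sigma>) = s"
      "B (tv \<alpha>) (tv \<alpha>) = a"
    unfolding s_def a_def
    using tvec_represents[OF \<sigma>H tvec_in_H[OF \<sigma>H]] tvec_represents[OF \<alpha>H tvec_in_H[OF \<sigma>H]]
      tvec_represents[OF \<alpha>H tvec_in_H[OF \<alpha>H]] symmetric[of "tv \<alpha>" "tv \<sigma>"]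
      isotropic_root_at_own_tvec[OF \<sigma>] by simp_all
  have \<beta>\<beta>: "\<beta> (tv \<beta>) = a + 2 * of_int n * s"
    using dform_eq[OF \<beta>H \<beta>H] unfolding dform_def t\<beta>
    by (simp add: B_add_left B_add_right B_scale_left B_scale_right B_tvecs algebra_simps)
  have \<sigma>\<beta>: "\<sigma> (tv \<beta>) = s"
    using tvec_represents[OF \<sigma>H tvec_in_H[OF \<beta>H]] unfolding t\<beta>
    by (simp add: B_add_left B_scale_left B_tvecs)
  have "a + 2 * of_int n * s \<noteq> 0"
    using M[OF n(1)] by auto
  then have "\<beta> \<in> Rx"
    using n(2) \<beta>\<beta> dform_eq[OF \<beta>H \<beta>H] unfolding nonisotropic_roots_def \<beta>_def by simp
  then have "2 * \<sigma> (tv \<beta>) / \<beta> (tv \<beta>) \<in> \<int>"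
    by (rule nonisotropic_root_integrality[OF _ \<sigma>R])
  then show False using M[OF n(1)] unfolding \<sigma>\<beta> \<beta>\<beta> by blast
qed

lemma tvec_isotropic_in_Hc:
  assumes \<sigma>: "\<sigma> \<in> R0" shows "tv \<sigma> \<in> Hc"
proof -
  obtain \<alpha> where \<alpha>: "\<alpha> \<in> Rx" and \<gamma>R: "(\<lambda>x. \<sigma> x + \<alpha> x) \<in> roots sc br H" (is "?\<gamma> \<in> _")
    using isotropic_root_non_isolated[OF \<sigma>] by blast
  have \<alpha>R: "\<alpha> \<in> roots sc br H" using \<alpha> nonisotropic_roots_subset by blast
  have \<sigma>H: "\<sigma> \<in> Hdual sc H" and \<alpha>H: "\<alpha> \<in> Hdual sc H"
    using \<sigma> \<alpha>R isotropic_roots_subset roots_subset_Hdual by blast+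
  have t\<gamma>: "tv ?\<gamma> = tv \<sigma> + tv \<alpha>"
    using tvec_lincomb[OF \<sigma>H \<alpha>H, of 1 1] by simp
  have "\<sigma> (tv \<sigma>) = 0" "\<alpha> (tv \<sigma>) = 0"
    using isotropic_root_at_own_tvec[OF \<sigma>] root_vanishes_at_isotropic_tvec[OF \<sigma> \<alpha>R] by blast+
  then have "B (tv \<sigma>) (tv \<sigma>) = 0" "B (tv \<sigma>) (tv \<alpha>) = 0"
    using tvec_represents[OF \<sigma>H tvec_in_H[OF \<sigma>H]] tvec_represents[OF \<alpha>H tvec_in_H[OF \<sigma>H]] by simp_all
  then have "dform B H ?\<gamma> ?\<gamma> = dform B H \<alpha> \<alpha>"
    unfolding dform_def t\<gamma> by (simp add: B_add_left B_add_right symmetric[of "tv \<alpha>" "tv \<sigma>"])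
  then have "?\<gamma> \<in> Rx" using \<gamma>R \<alpha> unfolding nonisotropic_roots_def by simp
  then have "tv ?\<gamma> - tv \<alpha> \<in> Hc"
    using \<alpha> by (intro span_diff span_base) auto
  then show ?thesis using t\<gamma> by simp
qed

lemma H0_subset_Hc: "H0 \<subseteq> Hc"
  using tvec_isotropic_in_Hc by (intro span_minimal subspace_span) blast

lemma B_H0_tvec_root:
  assumes z: "z \<in> H0" and \<alpha>: "\<alpha> \<in> roots sc br H"
  shows "B z (tv \<alpha>) = 0"
proof (rule B_eq_0_on_spans[OF _ z span_base])
  have \<alpha>H: "\<alpha> \<in> Hdual sc H" using \<alpha> roots_subset_Hdual by blast
  show "\<forall>s\<in>tv ` R0. \<forall>t\<in>{tv \<alpha>}. B s t = 0"
  proof (intro ballI)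
    fix s t assume "s \<in> tv ` R0" "t \<in> {tv \<alpha>}"
    then obtain \<sigma> where \<sigma>: "\<sigma> \<in> R0" "s = tv \<sigma>" "t = tv \<alpha>" by blast
    then have "\<sigma> \<in> Hdual sc H" using isotropic_roots_subset roots_subset_Hdual by blast
    then show "B s t = 0"
      using root_vanishes_at_isotropic_tvec[OF \<sigma>(1) \<alpha>] tvec_represents[OF \<alpha>H tvec_in_H] \<sigma> by simp
  qed
qed simp

section \<open>Tameness and the subspace \<open>H\<^sub>c + Hhat\<^sub>0\<close>\<close>

lemma Rx_annihilator_orth_centralizes_core:
  assumes k: "k \<in> H" "\<forall>\<alpha>\<in>Rx. \<alpha> k = 0" and z: "z \<in> Ec"
  shows "B k z = 0 \<and> br k z = 0"
proof -
  define Q where "Q = {z. B k z = 0 \<and> br k z = 0}"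
  have "br x y \<in> Q" if "x \<in> Q" "y \<in> Q" for x y
    using that br_leibniz[of k x y] B_invariant[of k x y] unfolding Q_def by simp
  then have "subalgebra sc br Q"
    unfolding subalgebra_def subspace_def Q_def
    by (simp add: B_add_right B_scale_right br_add_right br_scale_right)
  moreover have "E \<alpha> \<subseteq> Q" if \<alpha>: "\<alpha> \<in> Rx" for \<alpha>
  proof
    fix x assume x: "x \<in> E \<alpha>"
    have \<alpha>H: "\<alpha> \<in> Hdual sc H" using \<alpha> nonisotropic_roots_subset roots_subset_Hdual by blast
    have "\<alpha> \<noteq> (\<lambda>_. 0)" using \<alpha> tvec_zero unfolding nonisotropic_roots_def dform_def by auto
    then show "x \<in> Q"
      using B_E_zero_orthogonal[OF \<alpha>H _ k(1) x] E_bracket_H[OF x k(1)] k(2) \<alpha> unfolding Q_def by simp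
  qed
  ultimately have "Ec \<subseteq> Q" unfolding core_def by blast
  then show ?thesis using z unfolding Q_def by blast
qed

lemma tame_Rx_annihilator_isotropic:
  assumes tame: "tame sc br B H"
    and k: "k \<in> H" "\<forall>\<alpha>\<in>Rx. \<alpha> k = 0" and k': "k' \<in> H" "\<forall>\<alpha>\<in>Rx. \<alpha> k' = 0"
  shows "B k k' = 0"
proof -
  have "k \<in> orth B UNIV Ec" unfolding orth_def using Rx_annihilator_orth_centralizes_core[OF k] by blast
  then have "k \<in> Ec" using tame unfolding tame_def centre_def by blast
  then have "B k' k = 0" using Rx_annihilator_orth_centralizes_core[OF k'] by blast
  then show ?thesis by (simp add: symmetric)
qed

lemma orthogonal_to_Hc_annihilated:
  assumes "p \<in> H" "\<forall>w\<in>Hc. B w p = 0"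
  shows "\<forall>\<alpha>\<in>Rx. \<alpha> p = 0"
proof
  fix \<alpha> assume \<alpha>: "\<alpha> \<in> Rx"
  then have "\<alpha> \<in> Hdual sc H" using nonisotropic_roots_subset roots_subset_Hdual by blast
  moreover have "B (tv \<alpha>) p = 0" using assms(2) \<alpha> by (simp add: span_base)
  ultimately show "\<alpha> p = 0"
    using assms(1) tvec_represents[of \<alpha> p] symmetric[of p "tv \<alpha>"] by simp
qed

lemma tame_nondegenerate_subspace_eq_H:
  assumes tame: "tame sc br B H"
    and U: "subspace U" "Hc \<subseteq> U" "U \<subseteq> H" and nondeg: "nondegenerate_on U"
  shows "U = H"
proof -
  have annihilated: "\<forall>\<alpha>\<in>Rx. \<alpha> p = 0" if "p \<in> H" "\<forall>w\<in>U. B w p = 0" for p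
    using orthogonal_to_Hc_annihilated that U(2) by blast
  obtain G where G: "finite G" "span G = U"
    using finitely_spanned_subspace[OF U(1,3)] by blast
  have split: "\<exists>u\<in>U. y - u \<in> H \<and> (\<forall>w\<in>U. B w (y - u) = 0)" if "y \<in> H" for y
    using orthogonal_projection_exists[OF G(1), of y] nondeg that U(3) subspace_diff[OF subspace_H]
    unfolding G(2) by blast
  have perp_zero: "p = 0" if p: "p \<in> H" "\<forall>w\<in>U. B w p = 0" for p
  proof (rule nondegenerate_on_HD[OF p(1)])
    fix y assume "y \<in> H"
    then obtain u where u: "u \<in> U" "y - u \<in> H" "\<forall>w\<in>U. B w (y - u) = 0"
      using split by blast
    have "B y p = B u p + B (y - u) p"
      by (simp add: B_diff_right symmetric[of _ p])
    also have "\<dots> = 0"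
      using p u tame_Rx_annihilator_isotropic[OF tame _ annihilated _ annihilated] by simp
    finally show "B y p = 0" .
  qed
  have "H \<subseteq> U"
  proof
    fix y assume "y \<in> H"
    then obtain u where "u \<in> U" "y - u \<in> H" "\<forall>w\<in>U. B w (y - u) = 0"
      using split by blast
    then show "y \<in> U" using perp_zero by fastforce
  qed
  then show ?thesis using U(3) by blast
qed

lemma finite_root_system_positive:
  assumes D: "finite_root_system B H D" "D \<subseteq> Hdual sc H"
    and v: "v = (\<Sum>a\<in>D. sc (of_real (r a)) (tv a))"
  shows "B v v \<in> \<real> \<and> 0 \<le> Re (B v v) \<and> (B v v = 0 \<longrightarrow> v = 0)"
proof (cases "v = 0")
  case False
  define \<rho> where "\<rho> = (\<lambda>x. \<Sum>a\<in>D. of_real (r a) * a x)"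
  have "finite D" using D(1) unfolding finite_root_system_def by blast
  then have "\<rho> \<in> rspan D" unfolding rspan_def \<rho>_def by blast
  moreover have "tv \<rho> = v" unfolding \<rho>_def v by (rule tvec_sum[OF \<open>finite D\<close> D(2)])
  then have "\<rho> \<noteq> (\<lambda>_. 0)" using False tvec_zero by auto
  ultimately have "dform B H \<rho> \<rho> \<in> \<real> \<and> Re (dform B H \<rho> \<rho>) > 0"
    using D(1) unfolding finite_root_system_def by blast
  then show ?thesis unfolding dform_def \<open>tv \<rho> = v\<close> by auto
qed simp

text \<open>For \<open>d = x + i y\<close> with \<open>x, y\<close> real combinations of the \<open>t\<^sub>a\<close>, pairing \<open>d\<close>
  with \<open>x - i y\<close> gives \<open>(x, x) + (y, y)\<close>.\<close>
lemma nondegenerate_on_span_finite_root_system: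
  assumes D: "finite_root_system B H D" "D \<subseteq> Hdual sc H"
  shows "nondegenerate_on (span (tv ` D))"
  unfolding nondegenerate_on_def
proof (intro ballI impI)
  fix d assume d: "d \<in> span (tv ` D)" and o: "\<forall>d'\<in>span (tv ` D). B d d' = 0"
  have fin: "finite D" using D(1) unfolding finite_root_system_def by blast
  define re where "re r = (\<Sum>a\<in>D. sc (of_real (r a)) (tv a))" for r
  obtain u where u: "d = (\<Sum>t\<in>tv ` D. sc (u t) t)"
    using d span_finite[of "tv ` D"] fin by blast
  have "inj_on tv D" using inj_on_tvec D(2) by (rule inj_on_subset)
  then have "d = (\<Sum>a\<in>D. sc (u (tv a)) (tv a))"
    unfolding u by (simp add: sum.reindex)
  also have "\<dots> = re (\<lambda>a. Re (u (tv a))) + sc \<i> (re (\<lambda>a. Im (u (tv a))))"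
    unfolding re_def scale_sum_right
    by (subst complex_eq) (simp add: scale_left_distrib scale_scale sum.distrib)
  finally have d_eq: "d = re (\<lambda>a. Re (u (tv a))) + sc \<i> (re (\<lambda>a. Im (u (tv a))))" .
  define x where "x = re (\<lambda>a. Re (u (tv a)))"
  define y where "y = re (\<lambda>a. Im (u (tv a)))"
  have xy: "B x x \<in> \<real> \<and> 0 \<le> Re (B x x) \<and> (B x x = 0 \<longrightarrow> x = 0)"
      "B y y \<in> \<real> \<and> 0 \<le> Re (B y y) \<and> (B y y = 0 \<longrightarrow> y = 0)"
    unfolding x_def y_def re_def by (rule finite_root_system_positive[OF D refl])+
  have "re r \<in> span (tv ` D)" for r
    unfolding re_def by (intro span_sum span_scale span_base) blast
  then have "x - sc \<i> y \<in> span (tv ` D)"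
    unfolding x_def y_def by (intro span_diff span_scale)
  then have "B d (x - sc \<i> y) = 0" using o by blast
  moreover have "B d (x - sc \<i> y) = B x x + B y y"
    unfolding d_eq x_def[symmetric] y_def[symmetric]
    by (simp add: B_add_left B_diff_right B_scale_left B_scale_right symmetric[of y x] algebra_simps)
  ultimately have "Re (B x x) + Re (B y y) = 0" by (metis plus_complex.sel(1) zero_complex.sel(1))
  then have "Re (B x x) = 0" "Re (B y y) = 0" using xy by linarith+
  then have "B x x = 0" "B y y = 0" using xy by (metis Reals_cases Re_complex_of_real of_real_0)+
  then show "d = 0" using xy d_eq unfolding x_def y_def by simp
qed

lemma span_tvec_finite_root_system_subset_Hc:
  assumes D: "finite_root_system B H D" "D \<subseteq> roots sc br H"
  shows "span (tv ` D) \<subseteq> Hc"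
proof (rule span_minimal[OF _ subspace_span], rule image_subsetI)
  fix a assume a: "a \<in> D"
  show "tv a \<in> Hc"
  proof (cases "a = (\<lambda>_. 0)")
    case True
    then show ?thesis using tvec_zero span_zero by simp
  next
    case False
    then have "Re (dform B H a a) > 0"
      using D(1) rspan_base[OF a] unfolding finite_root_system_def by blast
    then have "a \<in> Rx" using a D(2) unfolding nonisotropic_roots_def by auto
    then show ?thesis by (intro span_base imageI)
  qed
qed

lemma Hc_subset_span_tvec_plus_H0:
  assumes D: "D \<subseteq> roots sc br H"
    and cover: "\<forall>\<alpha>\<in>roots sc br H. \<exists>a\<in>D. (\<lambda>x. \<alpha> x - a x) \<in> rspan R0"
  shows "Hc \<subseteq> ssum (span (tv ` D)) H0"
proof (rule span_minimal[OF _ subspace_ssum[OF subspace_span subspace_span]], rule image_subsetI)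
  fix \<alpha> assume "\<alpha> \<in> Rx"
  then have \<alpha>R: "\<alpha> \<in> roots sc br H" using nonisotropic_roots_subset by blast
  then obtain a F c where a: "a \<in> D" and F: "finite F" "F \<subseteq> R0"
    and diff: "(\<lambda>x. \<alpha> x - a x) = (\<lambda>x. \<Sum>\<sigma>\<in>F. of_real (c \<sigma>) * \<sigma> x)"
    using cover unfolding rspan_def by blast
  have \<alpha>H: "\<alpha> \<in> Hdual sc H" and aH: "a \<in> Hdual sc H" and FH: "F \<subseteq> Hdual sc H"
    using \<alpha>R a D F(2) isotropic_roots_subset roots_subset_Hdual by blast+
  define z where "z = (\<Sum>\<sigma>\<in>F. sc (of_real (c \<sigma>)) (tv \<sigma>))"
  have "z = tv (\<lambda>x. \<alpha> x - a x)"
    unfolding z_def diff by (rule tvec_sum[OF F(1) FH, symmetric])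
  also have "\<dots> = tv \<alpha> - tv a"
    using tvec_lincomb[OF \<alpha>H aH, of 1 "-1"] by simp
  finally have "tv \<alpha> = tv a + z" by simp
  moreover have "z \<in> H0"
    unfolding z_def using F(2) by (intro span_sum span_scale span_base) blast
  ultimately show "tv \<alpha> \<in> ssum (span (tv ` D)) H0"
    using a by (simp add: ssumI span_base)
qed

lemma nondegenerate_on_Hc_plus_complement:
  assumes D: "finite_root_system B H D" "D \<subseteq> roots sc br H"
    and cover: "\<forall>\<alpha>\<in>roots sc br H. \<exists>a\<in>D. (\<lambda>x. \<alpha> x - a x) \<in> rspan R0"
    and W: "subspace W" "W \<subseteq> orth B H (span (tv ` D))" "nondegenerate_on (ssum H0 W)"
  shows "nondegenerate_on (ssum Hc W)"
  unfolding nondegenerate_on_def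
proof (intro ballI impI)
  fix u assume "u \<in> ssum Hc W" and o: "\<forall>u'\<in>ssum Hc W. B u u' = 0"
  then obtain c w where c: "c \<in> Hc" and w: "w \<in> W" and u: "u = c + w"
    by (blast elim: ssumE)
  then obtain d z where d: "d \<in> span (tv ` D)" and z: "z \<in> H0" and c_eq: "c = d + z"
    using Hc_subset_span_tvec_plus_H0[OF D(2) cover] by (blast elim: ssumE)
  have in_sum: "x \<in> ssum Hc W" if "x \<in> Hc" for x
    using ssumI[OF that subspace_0[OF W(1)]] by simp
  have "B d d' = 0" if d': "d' \<in> span (tv ` D)" for d'
  proof -
    have "B u d' = 0"
      using o in_sum span_tvec_finite_root_system_subset_Hc[OF D] d' by blast
    moreover have "B z d' = 0"
      using B_eq_0_on_spans[of "{z}" "tv ` D" z d'] B_H0_tvec_root[OF z] D(2) d' by (auto intro: span_base)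
    moreover have "B w d' = 0"
      using W(2) w d' unfolding orth_def by blast
    ultimately show ?thesis
      unfolding u c_eq by (simp add: B_add_left)
  qed
  then have "d = 0"
    using nondegenerate_on_span_finite_root_system D d roots_subset_Hdual
    unfolding nondegenerate_on_def by blast
  then have "u \<in> ssum H0 W" using u c_eq z w by (simp add: ssumI)
  moreover have "B u y = 0" if "y \<in> ssum H0 W" for y
    using that o H0_subset_Hc by (blast elim: ssumE intro: ssumI)
  ultimately show "u = 0"
    using W(3) unfolding nondegenerate_on_def by blast
qed

end

theorem lemma4p7:
  fixes sc :: "complex \<Rightarrow> 'a::ab_group_add \<Rightarrow> 'a"
    and br :: "'a \<Rightarrow> 'a \<Rightarrow> 'a"
    and B :: "'a \<Rightarrow> 'a \<Rightarrow> complex"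
    and H :: "'a set"
    and dotR :: "('a \<Rightarrow> complex) set"
    and Hhat0 :: "'a set"
  defines "R \<equiv> roots sc br H"
    and "Rx \<equiv> nonisotropic_roots sc br B H"
    and "R0 \<equiv> isotropic_roots sc br B H"
    and "V0 \<equiv> rspan (isotropic_roots sc br B H)"
    and "dotH \<equiv> module.span sc (tvec B H ` dotR)"
    and "Hc \<equiv> module.span sc (tvec B H ` nonisotropic_roots sc br B H)"
    and "H0 \<equiv> module.span sc (tvec B H ` isotropic_roots sc br B H)"
    and "Ec \<equiv> core sc br B H"
  assumes eala: "EALA sc br B H"
    and reduced: "\<forall>\<alpha>\<in>R. \<forall>\<beta>\<in>R. \<alpha> \<notin> V0 \<longrightarrow> (\<lambda>x. \<beta> x - 2 * \<alpha> x) \<notin> V0"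
    and dotR_sub: "dotR \<subseteq> R"
    and dotR_zero: "(\<lambda>_. 0) \<in> dotR"
    and dotR_rs: "finite_root_system B H dotR"
    and dotR_cover: "\<forall>\<alpha>\<in>R. \<exists>a\<in>dotR. (\<lambda>x. \<alpha> x - a x) \<in> V0"
    and dotR_inj: "\<forall>a\<in>dotR. \<forall>b\<in>dotR. (\<lambda>x. a x - b x) \<in> V0 \<longrightarrow> a = b"
    and Hhat0_sub: "module.subspace sc Hhat0"
    and Hhat0_orth: "Hhat0 \<subseteq> orth B H dotH"
    and Hhat0_dim: "vector_space.dim sc Hhat0 = vector_space.dim sc H0"
    and Hhat0_iso: "\<forall>x\<in>Hhat0. \<forall>y\<in>Hhat0. B x y = 0"
    and Hhat0_direct: "H0 \<inter> Hhat0 = {0}"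
    and Hhat0_nondeg: "\<forall>x\<in>ssum H0 Hhat0. (\<forall>y\<in>ssum H0 Hhat0. B x y = 0) \<longrightarrow> x = 0"
    and tame: "tame sc br B H"
  shows "orth B H (ssum Hc Hhat0) = {0} \<and> ssum (ssum Hc Hhat0) Ec = ssum H Ec"
proof -
  have "vector_space sc"
    using eala unfolding EALA_def lie_algebra_def by (elim conjE)
  then interpret eala sc br B H
    using eala by (intro eala.intro eala_axioms.intro)
  have "Hc \<subseteq> H"
    unfolding Hc_def using span_tvec_subset_H nonisotropic_roots_subset roots_subset_Hdual by blast
  moreover have "Hhat0 \<subseteq> H" using Hhat0_orth unfolding orth_def by blast
  ultimately have "ssum Hc Hhat0 \<subseteq> H"
    using subspace_add[OF subspace_H] by (blast elim: ssumE)
  moreover have "Hc \<subseteq> ssum Hc Hhat0"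
    using ssumI[of _ Hc 0 Hhat0] subspace_0[OF Hhat0_sub] by auto
  moreover have "subspace (ssum Hc Hhat0)"
    unfolding Hc_def using subspace_ssum[OF subspace_span Hhat0_sub] .
  moreover have "nondegenerate_on (ssum Hc Hhat0)"
    using nondegenerate_on_Hc_plus_complement[OF dotR_rs _ _ Hhat0_sub] dotR_sub dotR_cover
      Hhat0_orth Hhat0_nondeg
    unfolding R_def V0_def dotH_def H0_def Hc_def nondegenerate_on_def by blast
  ultimately have "ssum Hc Hhat0 = H"
    using tame_nondegenerate_subspace_eq_H[OF tame] unfolding Hc_def by blast
  moreover have "orth B H H = {0}"
    using nondegenerate_on_H subspace_0[OF subspace_H] unfolding orth_def nondegenerate_on_def by auto
  ultimately show ?thesis by simp
qed

end
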